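(* Let a group $G$ act faithfully and uniformly equicontinuously on a cofinite graph $\Gamma$, let $I$ be a fundamental system of $G$-invariant compatible cofinite entourages of $\Gamma$, let $\widehat{\Gamma}=\varprojlim_{R\in I}\Gamma/R$ and $\widehat{G}=\varprojlim_{R\in I}G/N_R$, with $\widehat{G}$ acting on $\widehat{\Gamma}$ by $(N_R[g_R])_R\cdot(R[x_R])_R=(R[g_R\cdot x_R])_R$. For $R\in I$ let $\overline{R}$ be the closure of $R$ in $\widehat{\Gamma}\times\widehat{\Gamma}$, let $\overline{N_R}$ be the closure of $N_R$ in $\widehat{G}\times\widehat{G}$, and let $N_{\overline R}=\{(g,h)\in\widehat{G}\times\widehat{G}:(g\cdot x,h\cdot x)\in\overline{R}\text{ for all }x\in\widehat{\Gamma}\}$. Then $\Phi_1=\{N_{\overline R}\mid R\in I\}$ and $\Phi_2=\{\overline{N_R}\mid R\in I\}$ are fundamental systems of cofinite congruences on $\widehat{G}$ defining equivalent uniformities on $\widehat{G}$.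
   Context: A graph $\Gamma$ is a set $\Gamma=V(\Gamma)\sqcup E(\Gamma)$ with maps $s,t\colon E\to V$ and a fixed-point-free involution $e\mapsto\overline e$ with $s(\overline e)=t(e)$, $t(\overline e)=s(e)$. An equivalence relation $R$ on $\Gamma$ is compatible if $R\subseteq (V\times V)\cup(E\times E)$, $(e,e')\in R$ implies $(s(e),s(e')),(t(e),t(e')),(\overline e,\overline{e'})\in R$, and $(e,\overline e)\notin R$. A cofinite entourage is an entourage that is an equivalence relation with finitely many classes; a cofinite congruence on a group is a cofinite equivalence relation $N$ with $(a,b),(c,d)\in N\Rightarrow(ac,bd)\in N$. A cofinite graph is a graph with a Hausdorff uniformity in which compatible cofinite entourages form a fundamental system. A group $G$ acts on $\Gamma$ if it acts on the set $\Gamma$ preserving vertices and edges, commuting with $s,t,\overline{\phantom e}$, and there is a $G$-invariant orientation. The action is uniformly equicontinuous if for each entourage $W$ there is an entourage $V$ with $(g\times g)[V]\subseteq W$ for all $g\in G$; it is faithful if every $g\ne 1$ moves some point. $R$ is $G$-invariant if $(g\times g)[R]\subseteq R$ for all $g$. $N_R=\{(g,h)\in G\times G:(g\cdot x,h\cdot x)\in R\ \forall x\in\Gamma\}$, a cofinite congruence on $G$; $G$ carries the uniformity with fundamental system $\{N_R: R\in I\}$, and $\widehat G$, $\widehat\Gamma$ are the corresponding completions, with $G\subseteq\widehat G$ and $\Gamma\subseteq\widehat\Gamma$. *)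

theory Defs
  imports "HOL-Analysis.Analysis" "HOL-Algebra.Group_Action"
begin

definition is_graph :: "'x set \<Rightarrow> 'x set \<Rightarrow> ('x \<Rightarrow> 'x) \<Rightarrow> ('x \<Rightarrow> 'x) \<Rightarrow> ('x \<Rightarrow> 'x) \<Rightarrow> bool" where
  "is_graph V E s t bar \<longleftrightarrow> V \<inter> E = {} \<and>
     (\<forall>e\<in>E. s e \<in> V \<and> t e \<in> V \<and> bar e \<in> E \<and> bar (bar e) = e \<and> bar e \<noteq> e
            \<and> s (bar e) = t e \<and> t (bar e) = s e)"

definition compatible_rel :: "'x set \<Rightarrow> 'x set \<Rightarrow> ('x \<Rightarrow> 'x) \<Rightarrow> ('x \<Rightarrow> 'x) \<Rightarrow> ('x \<Rightarrow> 'x) \<Rightarrow> 'x rel \<Rightarrow> bool" where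
  "compatible_rel V E s t bar R \<longleftrightarrow> equiv (V \<union> E) R \<and> R \<subseteq> (V \<times> V) \<union> (E \<times> E) \<and>
     (\<forall>(e, e')\<in>R. e \<in> E \<longrightarrow> (s e, s e') \<in> R \<and> (t e, t e') \<in> R \<and> (bar e, bar e') \<in> R) \<and>
     (\<forall>e\<in>E. (e, bar e) \<notin> R)"

definition cofinite_equiv :: "'a set \<Rightarrow> 'a rel \<Rightarrow> bool" where
  "cofinite_equiv X R \<longleftrightarrow> equiv X R \<and> finite (X // R)"

definition is_uniformity :: "'a set \<Rightarrow> 'a rel set \<Rightarrow> bool" where
  "is_uniformity X U \<longleftrightarrow> U \<noteq> {} \<and>
     (\<forall>W\<in>U. Id_on X \<subseteq> W \<and> W \<subseteq> X \<times> X) \<and>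
     (\<forall>W\<in>U. \<forall>W'. W \<subseteq> W' \<and> W' \<subseteq> X \<times> X \<longrightarrow> W' \<in> U) \<and>
     (\<forall>W\<in>U. \<forall>W'\<in>U. W \<inter> W' \<in> U) \<and>
     (\<forall>W\<in>U. W\<inverse> \<in> U) \<and>
     (\<forall>W\<in>U. \<exists>W'\<in>U. W' O W' \<subseteq> W)"

definition hausdorff_uniformity :: "'a set \<Rightarrow> 'a rel set \<Rightarrow> bool" where
  "hausdorff_uniformity X U \<longleftrightarrow> is_uniformity X U \<and> \<Inter>U = Id_on X"

definition fundamental_system :: "'a rel set \<Rightarrow> 'a rel set \<Rightarrow> bool" where
  "fundamental_system U B \<longleftrightarrow> B \<subseteq> U \<and> (\<forall>W\<in>U. \<exists>W'\<in>B. W' \<subseteq> W)"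

definition cofinite_graph :: "'x set \<Rightarrow> 'x set \<Rightarrow> ('x \<Rightarrow> 'x) \<Rightarrow> ('x \<Rightarrow> 'x) \<Rightarrow> ('x \<Rightarrow> 'x) \<Rightarrow> 'x rel set \<Rightarrow> bool" where
  "cofinite_graph V E s t bar U \<longleftrightarrow> is_graph V E s t bar \<and> hausdorff_uniformity (V \<union> E) U \<and>
     fundamental_system U {R\<in>U. compatible_rel V E s t bar R \<and> cofinite_equiv (V \<union> E) R}"

definition graph_action :: "('g, 'm) monoid_scheme \<Rightarrow> 'x set \<Rightarrow> 'x set \<Rightarrow> ('x \<Rightarrow> 'x) \<Rightarrow> ('x \<Rightarrow> 'x) \<Rightarrow> ('x \<Rightarrow> 'x) \<Rightarrow> ('g \<Rightarrow> 'x \<Rightarrow> 'x) \<Rightarrow> bool" where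
  "graph_action G V E s t bar act \<longleftrightarrow> group_action G (V \<union> E) act \<and>
     (\<forall>g\<in>carrier G. act g ` V \<subseteq> V \<and> act g ` E \<subseteq> E \<and>
        (\<forall>e\<in>E. s (act g e) = act g (s e) \<and> t (act g e) = act g (t e) \<and> bar (act g e) = act g (bar e))) \<and>
     (\<exists>Or \<subseteq> E. (\<forall>e\<in>E. (e \<in> Or) = (bar e \<notin> Or)) \<and> (\<forall>g\<in>carrier G. act g ` Or \<subseteq> Or))"

definition pair_map :: "('a \<Rightarrow> 'b) \<Rightarrow> 'a \<times> 'a \<Rightarrow> 'b \<times> 'b" where
  "pair_map f = (\<lambda>(x, y). (f x, f y))"

definition unif_equicontinuous :: "('g, 'm) monoid_scheme \<Rightarrow> ('g \<Rightarrow> 'x \<Rightarrow> 'x) \<Rightarrow> 'x rel set \<Rightarrow> bool" where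
  "unif_equicontinuous G act U \<longleftrightarrow>
     (\<forall>W\<in>U. \<exists>W'\<in>U. \<forall>g\<in>carrier G. pair_map (act g) ` W' \<subseteq> W)"

definition faithful_action :: "('g, 'm) monoid_scheme \<Rightarrow> 'x set \<Rightarrow> ('g \<Rightarrow> 'x \<Rightarrow> 'x) \<Rightarrow> bool" where
  "faithful_action G X act \<longleftrightarrow> (\<forall>g\<in>carrier G. g \<noteq> \<one>\<^bsub>G\<^esub> \<longrightarrow> (\<exists>x\<in>X. act g x \<noteq> x))"

definition invariant_rel :: "('g, 'm) monoid_scheme \<Rightarrow> ('g \<Rightarrow> 'x \<Rightarrow> 'x) \<Rightarrow> 'x rel \<Rightarrow> bool" where
  "invariant_rel G act R \<longleftrightarrow> (\<forall>g\<in>carrier G. pair_map (act g) ` R \<subseteq> R)"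

definition NR :: "('g, 'm) monoid_scheme \<Rightarrow> 'x set \<Rightarrow> ('g \<Rightarrow> 'x \<Rightarrow> 'x) \<Rightarrow> 'x rel \<Rightarrow> 'g rel" where
  "NR G X act R = {(g, h) \<in> carrier G \<times> carrier G. \<forall>x\<in>X. (act g x, act h x) \<in> R}"

text \<open>$\widehat\Gamma = \varprojlim_{R\in I} \Gamma/R$: compatible families of classes.\<close>
definition hatX :: "'x set \<Rightarrow> 'x rel set \<Rightarrow> ('x rel \<Rightarrow> 'x set) set" where
  "hatX X I = {c \<in> (\<Pi>\<^sub>E R\<in>I. X // R). \<forall>R\<in>I. \<forall>S\<in>I. R \<subseteq> S \<longrightarrow> c R \<subseteq> c S}"

definition embX :: "'x rel set \<Rightarrow> 'x \<Rightarrow> ('x rel \<Rightarrow> 'x set)" where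
  "embX I x = (\<lambda>R\<in>I. R `` {x})"

text \<open>$\widehat G = \varprojlim_{R\in I} G/N_R$.\<close>
definition hatG :: "('g, 'm) monoid_scheme \<Rightarrow> 'x set \<Rightarrow> ('g \<Rightarrow> 'x \<Rightarrow> 'x) \<Rightarrow> 'x rel set \<Rightarrow> ('x rel \<Rightarrow> 'g set) set" where
  "hatG G X act I = {d \<in> (\<Pi>\<^sub>E R\<in>I. carrier G // NR G X act R).
      \<forall>R\<in>I. \<forall>S\<in>I. R \<subseteq> S \<longrightarrow> d R \<subseteq> d S}"

definition embG :: "('g, 'm) monoid_scheme \<Rightarrow> 'x set \<Rightarrow> ('g \<Rightarrow> 'x \<Rightarrow> 'x) \<Rightarrow> 'x rel set \<Rightarrow> 'g \<Rightarrow> ('x rel \<Rightarrow> 'g set)" where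
  "embG G X act I g = (\<lambda>R\<in>I. NR G X act R `` {g})"

text \<open>Action $(N_R[g_R])_R\cdot(R[x_R])_R = (R[g_R\cdot x_R])_R$ (via chosen representatives).\<close>
definition hat_act :: "('g \<Rightarrow> 'x \<Rightarrow> 'x) \<Rightarrow> 'x rel set \<Rightarrow> ('x rel \<Rightarrow> 'g set) \<Rightarrow> ('x rel \<Rightarrow> 'x set) \<Rightarrow> ('x rel \<Rightarrow> 'x set)" where
  "hat_act act I d c = (\<lambda>R\<in>I. R `` {act (SOME g. g \<in> d R) (SOME x. x \<in> c R)})"

definition hat_mult :: "('g, 'm) monoid_scheme \<Rightarrow> 'x set \<Rightarrow> ('g \<Rightarrow> 'x \<Rightarrow> 'x) \<Rightarrow> 'x rel set \<Rightarrow> ('x rel \<Rightarrow> 'g set) \<Rightarrow> ('x rel \<Rightarrow> 'g set) \<Rightarrow> ('x rel \<Rightarrow> 'g set)" where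
  "hat_mult G X act I d e = (\<lambda>R\<in>I. NR G X act R `` {(SOME g. g \<in> d R) \<otimes>\<^bsub>G\<^esub> (SOME h. h \<in> e R)})"

definition topX :: "'x set \<Rightarrow> 'x rel set \<Rightarrow> ('x rel \<Rightarrow> 'x set) topology" where
  "topX X I = subtopology (product_topology (\<lambda>R. discrete_topology (X // R)) I) (hatX X I)"

definition topG :: "('g, 'm) monoid_scheme \<Rightarrow> 'x set \<Rightarrow> ('g \<Rightarrow> 'x \<Rightarrow> 'x) \<Rightarrow> 'x rel set \<Rightarrow> ('x rel \<Rightarrow> 'g set) topology" where
  "topG G X act I = subtopology (product_topology (\<lambda>R. discrete_topology (carrier G // NR G X act R)) I) (hatG G X act I)"

definition closR :: "'x set \<Rightarrow> 'x rel set \<Rightarrow> 'x rel \<Rightarrow> (('x rel \<Rightarrow> 'x set) \<times> ('x rel \<Rightarrow> 'x set)) set" where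
  "closR X I R = (prod_topology (topX X I) (topX X I)) closure_of (pair_map (embX I) ` R)"

definition closNR :: "('g, 'm) monoid_scheme \<Rightarrow> 'x set \<Rightarrow> ('g \<Rightarrow> 'x \<Rightarrow> 'x) \<Rightarrow> 'x rel set \<Rightarrow> 'x rel \<Rightarrow> (('x rel \<Rightarrow> 'g set) \<times> ('x rel \<Rightarrow> 'g set)) set" where
  "closNR G X act I R = (prod_topology (topG G X act I) (topG G X act I)) closure_of
      (pair_map (embG G X act I) ` NR G X act R)"

definition N_closR :: "('g, 'm) monoid_scheme \<Rightarrow> 'x set \<Rightarrow> ('g \<Rightarrow> 'x \<Rightarrow> 'x) \<Rightarrow> 'x rel set \<Rightarrow> 'x rel \<Rightarrow> (('x rel \<Rightarrow> 'g set) \<times> ('x rel \<Rightarrow> 'g set)) set" where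
  "N_closR G X act I R = {(g, h) \<in> hatG G X act I \<times> hatG G X act I.
      \<forall>x\<in>hatX X I. (hat_act act I g x, hat_act act I h x) \<in> closR X I R}"

definition cofinite_congruence :: "'a set \<Rightarrow> ('a \<Rightarrow> 'a \<Rightarrow> 'a) \<Rightarrow> 'a rel \<Rightarrow> bool" where
  "cofinite_congruence X mul N \<longleftrightarrow> cofinite_equiv X N \<and>
     (\<forall>(a, b)\<in>N. \<forall>(c, d)\<in>N. (mul a c, mul b d) \<in> N)"

definition fund_system_cofinite_congruences :: "'a set \<Rightarrow> ('a \<Rightarrow> 'a \<Rightarrow> 'a) \<Rightarrow> 'a rel set \<Rightarrow> bool" where
  "fund_system_cofinite_congruences X mul \<Phi> \<longleftrightarrow> \<Phi> \<noteq> {} \<and>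
     (\<forall>N\<in>\<Phi>. cofinite_congruence X mul N) \<and>
     (\<forall>A\<in>\<Phi>. \<forall>B\<in>\<Phi>. \<exists>C\<in>\<Phi>. C \<subseteq> A \<inter> B)"

definition equivalent_bases :: "'a rel set \<Rightarrow> 'a rel set \<Rightarrow> bool" where
  "equivalent_bases \<Phi> \<Psi> \<longleftrightarrow> (\<forall>A\<in>\<Phi>. \<exists>B\<in>\<Psi>. B \<subseteq> A) \<and> (\<forall>B\<in>\<Psi>. \<exists>A\<in>\<Phi>. A \<subseteq> B)"

end

theory Submission
  imports Defs
begin

text \<open>All three families consist of the kernels of the projections \<open>\<widehat>G \<rightarrow> G/N\<^sub>R\<close>.
  In an inverse limit of finite discrete quotients a basic open set constrains finitely many
  coordinates, hence, \<open>I\<close> being directed, a single one; so the closure of the image of an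
  equivalence \<open>R\<close> consists of the pairs with equal \<open>R\<close>-coordinate. For \<open>N\<^bsub>\<overline>R\<^esub>\<close>, testing
  \<open>d, e \<in> \<widehat>G\<close> on the images of points of \<open>\<Gamma>\<close> shows that their \<open>R\<close>-coordinates induce the same map
  on \<open>\<Gamma>/R\<close>, i.e.\ agree modulo \<open>N\<^sub>R\<close>. These kernels are cofinite congruences because \<open>G/N\<^sub>R\<close> embeds
  into the self-maps of the finite set \<open>\<Gamma>/R\<close> and the multiplication of \<open>\<widehat>G\<close> is coordinatewise.\<close>

lemma equiv_kernel_on: "equiv A {(x, y) \<in> A \<times> A. f x = f y}"
  by (rule equivI) (auto simp: refl_on_def sym_on_def trans_on_def)

lemma finite_quotient_kernel_on:
  assumes "finite (f ` A)"
  shows "finite (A // {(x, y) \<in> A \<times> A. f x = f y})"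
proof -
  have "A // {(x, y) \<in> A \<times> A. f x = f y} \<subseteq> (\<lambda>v. {y \<in> A. f y = v}) ` f ` A"
  proof
    fix C assume "C \<in> A // {(x, y) \<in> A \<times> A. f x = f y}"
    then obtain x where x: "x \<in> A" and C: "C = {(x, y) \<in> A \<times> A. f x = f y} `` {x}"
      by (rule quotientE)
    then have "C = {y \<in> A. f y = f x}"
      by auto
    then show "C \<in> (\<lambda>v. {y \<in> A. f y = v}) ` f ` A"
      using x by blast
  qed
  then show ?thesis
    using assms finite_subset by blast
qed

lemma fundamental_system_directed:
  assumes "is_uniformity X U" and "fundamental_system U I" and "R \<in> I" and "S \<in> I"
  shows "\<exists>T\<in>I. T \<subseteq> R \<and> T \<subseteq> S"
proof -
  have "\<forall>W\<in>U. \<forall>W'\<in>U. W \<inter> W' \<in> U"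
    using assms(1) unfolding is_uniformity_def by (elim conjE)
  moreover have "I \<subseteq> U" and fund: "\<forall>W\<in>U. \<exists>W'\<in>I. W' \<subseteq> W"
    using assms(2) unfolding fundamental_system_def by auto
  ultimately have "R \<inter> S \<in> U"
    using assms(3,4) by blast
  then obtain T where "T \<in> I" "T \<subseteq> R \<inter> S"
    using fund by blast
  then show ?thesis
    by blast
qed

lemma fundamental_system_nonempty:
  assumes "is_uniformity X U" and "fundamental_system U I"
  shows "I \<noteq> {}"
proof -
  have "U \<noteq> {}"
    using assms(1) unfolding is_uniformity_def by (elim conjE)
  then obtain W where "W \<in> U"
    by blast
  then show ?thesis
    using assms(2) unfolding fundamental_system_def by blast
qed

locale quotient_inverse_system =
  fixes A :: "'a set" and Q :: "'i set \<Rightarrow> 'a rel" and I :: "'i set set"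
  assumes equiv_Q: "\<And>R. R \<in> I \<Longrightarrow> equiv A (Q R)"
    and mono_Q: "\<And>R S. R \<in> I \<Longrightarrow> S \<in> I \<Longrightarrow> R \<subseteq> S \<Longrightarrow> Q R \<subseteq> Q S"
    and directed: "\<And>R S. R \<in> I \<Longrightarrow> S \<in> I \<Longrightarrow> \<exists>T\<in>I. T \<subseteq> R \<and> T \<subseteq> S"
begin

definition lim :: "('i set \<Rightarrow> 'a set) set" where
  "lim = {c \<in> (\<Pi>\<^sub>E R\<in>I. A // Q R). \<forall>R\<in>I. \<forall>S\<in>I. R \<subseteq> S \<longrightarrow> c R \<subseteq> c S}"

definition emb :: "'a \<Rightarrow> 'i set \<Rightarrow> 'a set" where
  "emb a = (\<lambda>R\<in>I. Q R `` {a})"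

definition lim_topology :: "('i set \<Rightarrow> 'a set) topology" where
  "lim_topology = subtopology (product_topology (\<lambda>R. discrete_topology (A // Q R)) I) lim"

definition proj_kernel :: "'i set \<Rightarrow> ('i set \<Rightarrow> 'a set) rel" where
  "proj_kernel R = {(c, c') \<in> lim \<times> lim. c R = c' R}"

lemma lim_component: "c \<in> lim \<Longrightarrow> R \<in> I \<Longrightarrow> c R \<in> A // Q R"
  unfolding lim_def by auto

lemma lim_component_nonempty: "c \<in> lim \<Longrightarrow> R \<in> I \<Longrightarrow> \<exists>a. a \<in> c R"
  using lim_component equiv_Q in_quotient_imp_non_empty by fastforce

lemma lim_component_subset: "c \<in> lim \<Longrightarrow> R \<in> I \<Longrightarrow> c R \<subseteq> A"
  using lim_component equiv_Q in_quotient_imp_subset by blast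

lemma lim_component_mono: "c \<in> lim \<Longrightarrow> R \<in> I \<Longrightarrow> S \<in> I \<Longrightarrow> R \<subseteq> S \<Longrightarrow> c R \<subseteq> c S"
  unfolding lim_def by blast

lemma some_in_lim_component: "c \<in> lim \<Longrightarrow> R \<in> I \<Longrightarrow> (SOME a. a \<in> c R) \<in> c R"
  using lim_component_nonempty by (metis someI)

lemma lim_memI:
  assumes "\<And>R. R \<in> I \<Longrightarrow> c R \<in> A // Q R"
    and "\<And>R S. R \<in> I \<Longrightarrow> S \<in> I \<Longrightarrow> R \<subseteq> S \<Longrightarrow> c R \<subseteq> c S"
    and "c \<in> extensional I"
  shows "c \<in> lim"
  using assms unfolding lim_def by (simp add: PiE_iff)

lemma lim_component_eq_class:
  assumes "c \<in> lim" and "T \<in> I" and "R \<in> I" and "T \<subseteq> R" and "a \<in> c T"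
  shows "c R = Q R `` {a}"
proof -
  obtain b where "c R = Q R `` {b}"
    using lim_component[OF assms(1,3)] by (rule quotientE)
  moreover have "a \<in> c R"
    using lim_component_mono[OF assms(1,2,3,4)] assms(5) by blast
  ultimately show ?thesis
    using equiv_class_eq[OF equiv_Q[OF assms(3)]] by simp
qed

lemma lim_component_eq_above:
  assumes "c \<in> lim" and "d \<in> lim" and "T \<in> I" and "R \<in> I" and "T \<subseteq> R" and "c T = d T"
  shows "c R = d R"
proof -
  obtain a where "a \<in> c T"
    using lim_component_nonempty[OF assms(1,3)] by blast
  then show ?thesis
    using lim_component_eq_class[OF assms(1,3-5)] lim_component_eq_class[OF assms(2,3-5)] assms(6) by simp
qed

lemma lim_component_rel:
  assumes "c \<in> lim" and "R \<in> I" and "a \<in> c R" and "b \<in> c R"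
  shows "(a, b) \<in> Q R"
  using in_quotient_imp_in_rel[OF equiv_Q[OF assms(2)] lim_component[OF assms(1,2)]] assms(3,4) by blast

lemma emb_in_lim: "a \<in> A \<Longrightarrow> emb a \<in> lim"
  unfolding lim_def emb_def using mono_Q by (auto intro: quotientI)

lemma emb_component: "c \<in> lim \<Longrightarrow> R \<in> I \<Longrightarrow> a \<in> c R \<Longrightarrow> emb a R = c R"
  using lim_component_eq_class[of c R R a] by (simp add: emb_def)

lemma directed_below_finite:
  "finite F \<Longrightarrow> F \<subseteq> I \<Longrightarrow> R \<in> I \<Longrightarrow> \<exists>T\<in>I. T \<subseteq> R \<and> (\<forall>S\<in>F. T \<subseteq> S)"
proof (induction F rule: finite_induct)
  case (insert S F)
  then obtain T where "T \<in> I" "T \<subseteq> R" "\<forall>S'\<in>F. T \<subseteq> S'"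
    by auto
  moreover obtain T' where "T' \<in> I" "T' \<subseteq> T" "T' \<subseteq> S"
    using directed[of T S] insert \<open>T \<in> I\<close> by auto
  ultimately show ?case
    by blast
qed blast

lemma topspace_lim_topology [simp]: "topspace lim_topology = lim"
proof -
  have "lim \<subseteq> (\<Pi>\<^sub>E R\<in>I. A // Q R)"
    unfolding lim_def by blast
  then show ?thesis
    unfolding lim_topology_def by (simp add: topspace_product_topology Int_absorb1)
qed

lemma continuous_map_proj: "R \<in> I \<Longrightarrow> continuous_map lim_topology (discrete_topology (A // Q R)) (\<lambda>c. c R)"
  unfolding lim_topology_def
  by (intro continuous_map_from_subtopology continuous_map_product_projection)

lemma openin_lim_topology_finite_support:
  assumes "openin lim_topology W" and "c \<in> W"
  shows "\<exists>F. finite F \<and> F \<subseteq> I \<and> (\<forall>c'\<in>lim. (\<forall>R\<in>F. c' R = c R) \<longrightarrow> c' \<in> W)"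
proof -
  obtain W' where W': "openin (product_topology (\<lambda>R. discrete_topology (A // Q R)) I) W'"
    and W: "W = W' \<inter> lim"
    using assms(1) unfolding lim_topology_def openin_subtopology by blast
  have "c \<in> W'"
    using W assms(2) by blast
  then obtain B where fin: "finite {R \<in> I. B R \<noteq> topspace (discrete_topology (A // Q R))}"
    and B: "c \<in> Pi\<^sub>E I B" "Pi\<^sub>E I B \<subseteq> W'"
    using W' unfolding openin_product_topology_alt by meson
  define F where "F = {R \<in> I. B R \<noteq> A // Q R}"
  have "c' \<in> W" if c': "c' \<in> lim" and agree: "\<forall>R\<in>F. c' R = c R" for c'
  proof -
    have "c' R \<in> B R" if "R \<in> I" for R
    proof (cases "R \<in> F")
      case True
      then show ?thesis
        using agree B(1) that by (simp add: PiE_iff)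
    next
      case False
      then show ?thesis
        using lim_component[OF c' that] that by (simp add: F_def)
    qed
    moreover have "c' \<in> extensional I"
      using c' unfolding lim_def by (simp add: PiE_iff)
    ultimately have "c' \<in> Pi\<^sub>E I B"
      by (simp add: PiE_iff)
    then show "c' \<in> W"
      using B(2) W c' by blast
  qed
  moreover have "finite F" "F \<subseteq> I"
    using fin by (simp_all add: F_def)
  ultimately show ?thesis
    by blast
qed

lemma openin_lim_topology_index:
  assumes "openin lim_topology W" and "c \<in> W" and "R \<in> I"
  shows "\<exists>T\<in>I. T \<subseteq> R \<and> (\<forall>d\<in>lim. d T = c T \<longrightarrow> d \<in> W)"
proof -
  obtain F where F: "finite F" "F \<subseteq> I" "\<forall>d\<in>lim. (\<forall>S\<in>F. d S = c S) \<longrightarrow> d \<in> W"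
    using openin_lim_topology_finite_support[OF assms(1,2)] by blast
  obtain T where T: "T \<in> I" "T \<subseteq> R" "\<forall>S\<in>F. T \<subseteq> S"
    using directed_below_finite[OF F(1,2) assms(3)] by blast
  have "c \<in> lim"
    using openin_subset[OF assms(1)] assms(2) by auto
  have "d \<in> W" if d: "d \<in> lim" "d T = c T" for d
  proof -
    have "d S = c S" if "S \<in> F" for S
      using lim_component_eq_above[OF d(1) \<open>c \<in> lim\<close> T(1) _ _ d(2)] F(2) T(3) that by blast
    then show ?thesis
      using F(3) d(1) by blast
  qed
  then show ?thesis
    using T by blast
qed

lemma closedin_proj_kernel:
  assumes "R \<in> I"
  shows "closedin (prod_topology lim_topology lim_topology) (proj_kernel R)"
proof -
  let ?P = "prod_topology lim_topology lim_topology"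
  have "continuous_map ?P (discrete_topology (A // Q R)) (\<lambda>z. fst z R)"
    using continuous_map_compose[OF continuous_map_fst continuous_map_proj[OF assms]] by (simp add: o_def)
  moreover have "continuous_map ?P (discrete_topology (A // Q R)) (\<lambda>z. snd z R)"
    using continuous_map_compose[OF continuous_map_snd continuous_map_proj[OF assms]] by (simp add: o_def)
  ultimately have "closedin ?P {z \<in> topspace ?P. fst z R = snd z R}"
    by (rule closedin_continuous_maps_eq[OF Hausdorff_space_discrete_topology])
  moreover have "{z \<in> topspace ?P. fst z R = snd z R} = proj_kernel R"
    unfolding proj_kernel_def topspace_prod_topology topspace_lim_topology by auto
  ultimately show ?thesis
    by simp
qed

lemma image_emb_subset_proj_kernel:
  assumes "R \<in> I"
  shows "pair_map emb ` Q R \<subseteq> proj_kernel R"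
proof (rule image_subsetI)
  fix p assume p: "p \<in> Q R"
  obtain a b where ab: "p = (a, b)"
    by (cases p)
  have "a \<in> A" "b \<in> A"
    using p ab equiv_Q[OF assms] unfolding equiv_def refl_on_def by blast+
  moreover have "emb a R = emb b R"
    using equiv_class_eq[OF equiv_Q[OF assms] p[unfolded ab]] assms by (simp add: emb_def)
  ultimately show "pair_map emb p \<in> proj_kernel R"
    by (simp add: ab pair_map_def proj_kernel_def emb_in_lim)
qed

lemma closure_emb_rel:
  assumes "R \<in> I"
  shows "prod_topology lim_topology lim_topology closure_of (pair_map emb ` Q R) = proj_kernel R"
proof
  show "prod_topology lim_topology lim_topology closure_of (pair_map emb ` Q R) \<subseteq> proj_kernel R"
    by (rule closure_of_minimal[OF image_emb_subset_proj_kernel closedin_proj_kernel, OF assms assms])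
next
  show "proj_kernel R \<subseteq> prod_topology lim_topology lim_topology closure_of (pair_map emb ` Q R)"
  proof
    fix z assume "z \<in> proj_kernel R"
    then obtain c c' where z: "z = (c, c')" and c: "c \<in> lim" "c' \<in> lim" and eq: "c R = c' R"
      unfolding proj_kernel_def by blast
    have "\<exists>y \<in> pair_map emb ` Q R. y \<in> W"
      if W: "(c, c') \<in> W" "openin (prod_topology lim_topology lim_topology) W" for W
    proof -
      obtain U V where UV: "openin lim_topology U" "openin lim_topology V" "c \<in> U" "c' \<in> V"
        "U \<times> V \<subseteq> W"
        using W(2)[unfolded openin_prod_topology_alt, rule_format, OF W(1)] by blast
      obtain TU where TU: "TU \<in> I" "TU \<subseteq> R" "\<forall>d\<in>lim. d TU = c TU \<longrightarrow> d \<in> U"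
        using openin_lim_topology_index[OF UV(1,3) assms] by blast
      obtain TV where TV: "TV \<in> I" "TV \<subseteq> R" "\<forall>d\<in>lim. d TV = c' TV \<longrightarrow> d \<in> V"
        using openin_lim_topology_index[OF UV(2,4) assms] by blast
      obtain T where T: "T \<in> I" "T \<subseteq> TU" "T \<subseteq> TV"
        using directed[OF TU(1) TV(1)] by blast
      obtain a b where ab: "a \<in> c T" "b \<in> c' T"
        using lim_component_nonempty[OF c(1) T(1)] lim_component_nonempty[OF c(2) T(1)] by blast
      then have A: "a \<in> A" "b \<in> A"
        using lim_component_subset c T(1) by blast+
      have emb: "emb a \<in> lim" "emb b \<in> lim"
        using emb_in_lim A by blast+
      have "emb a T = c T" "emb b T = c' T"
        using emb_component c T(1) ab by blast+
      then have "emb a TU = c TU" "emb b TV = c' TV" "emb a R = c R" "emb b R = c' R"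
        using lim_component_eq_above[OF emb(1) c(1) T(1)] lim_component_eq_above[OF emb(2) c(2) T(1)]
          TU(1,2) TV(1,2) T(2,3) assms by (meson order_trans)+
      then have "emb a \<in> U" "emb b \<in> V" "Q R `` {a} = Q R `` {b}"
        using TU(3) TV(3) emb eq assms by (simp_all add: emb_def)
      then have "emb a \<in> U" "emb b \<in> V" "(a, b) \<in> Q R"
        using eq_equiv_class_iff[OF equiv_Q[OF assms] A] by simp_all
      then show ?thesis
        using UV(5) by (force simp: pair_map_def)
    qed
    moreover have "(c, c') \<in> topspace (prod_topology lim_topology lim_topology)"
      using c by (simp add: topspace_prod_topology)
    ultimately show "z \<in> prod_topology lim_topology lim_topology closure_of (pair_map emb ` Q R)"
      unfolding in_closure_of z by blast
  qed
qed

lemma equiv_proj_kernel: "equiv lim (proj_kernel R)"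
  unfolding proj_kernel_def by (rule equiv_kernel_on)

lemma finite_quotient_proj_kernel:
  assumes "R \<in> I" and "finite (A // Q R)"
  shows "finite (lim // proj_kernel R)"
  unfolding proj_kernel_def
proof (rule finite_quotient_kernel_on)
  have "(\<lambda>c. c R) ` lim \<subseteq> A // Q R"
    using lim_component[OF _ assms(1)] by blast
  then show "finite ((\<lambda>c. c R) ` lim)"
    using assms(2) by (rule finite_subset)
qed

lemma proj_kernel_mono:
  assumes "T \<in> I" and "R \<in> I" and "T \<subseteq> R"
  shows "proj_kernel T \<subseteq> proj_kernel R"
  using lim_component_eq_above[OF _ _ assms] unfolding proj_kernel_def by blast

end

locale action_completion =
  fixes G :: "('g, 'm) monoid_scheme" and X :: "'x set" and act :: "'g \<Rightarrow> 'x \<Rightarrow> 'x"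
    and I :: "'x rel set"
  assumes group_G: "group G"
    and action: "group_action G X act"
    and equiv_I: "\<And>R. R \<in> I \<Longrightarrow> equiv X R"
    and finite_I: "\<And>R. R \<in> I \<Longrightarrow> finite (X // R)"
    and invariant_I: "\<And>R. R \<in> I \<Longrightarrow> invariant_rel G act R"
    and directed_I: "\<And>R S. R \<in> I \<Longrightarrow> S \<in> I \<Longrightarrow> \<exists>T\<in>I. T \<subseteq> R \<and> T \<subseteq> S"
    and nonempty_I: "I \<noteq> {}"
begin

abbreviation N :: "'x rel \<Rightarrow> 'g rel" where
  "N R \<equiv> NR G X act R"

lemma act_closed: "g \<in> carrier G \<Longrightarrow> x \<in> X \<Longrightarrow> act g x \<in> X"
  using group_action.element_image[OF action] by blast

lemma act_rel: "R \<in> I \<Longrightarrow> g \<in> carrier G \<Longrightarrow> (x, y) \<in> R \<Longrightarrow> (act g x, act g y) \<in> R"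
  using invariant_I unfolding invariant_rel_def pair_map_def by blast

text \<open>\<open>N R\<close> is the kernel of \<open>g \<mapsto> act_classes R g\<close>, so \<open>G/N R\<close> embeds into the finite set
  of self-maps of \<open>X // R\<close>.\<close>
definition act_classes :: "'x rel \<Rightarrow> 'g \<Rightarrow> 'x set \<Rightarrow> 'x set" where
  "act_classes R g = (\<lambda>C\<in>X // R. R `` (act g ` C))"

lemma act_classes_class:
  assumes "R \<in> I" and "g \<in> carrier G" and "x \<in> X"
  shows "act_classes R g (R `` {x}) = R `` {act g x}"
proof -
  have "R `` (act g ` (R `` {x})) = R `` {act g x}"
  proof
    show "R `` (act g ` (R `` {x})) \<subseteq> R `` {act g x}"
      using act_rel[OF assms(1,2)] equiv_I[OF assms(1)] unfolding equiv_def trans_on_def by blast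
    show "R `` {act g x} \<subseteq> R `` (act g ` (R `` {x}))"
      using equiv_class_self[OF equiv_I[OF assms(1)] assms(3)] by blast
  qed
  then show ?thesis
    using assms(3) by (simp add: act_classes_def quotientI)
qed

lemma NR_eq_kernel:
  assumes "R \<in> I"
  shows "N R = {(g, h) \<in> carrier G \<times> carrier G. act_classes R g = act_classes R h}"
proof -
  have "(\<forall>x\<in>X. (act g x, act h x) \<in> R) \<longleftrightarrow> act_classes R g = act_classes R h"
    if g: "g \<in> carrier G" and h: "h \<in> carrier G" for g h
  proof -
    have "(\<forall>x\<in>X. (act g x, act h x) \<in> R) \<longleftrightarrow> (\<forall>x\<in>X. R `` {act g x} = R `` {act h x})"
      using eq_equiv_class_iff[OF equiv_I[OF assms] act_closed act_closed] g h by blast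
    also have "\<dots> \<longleftrightarrow> (\<forall>C\<in>X // R. act_classes R g C = act_classes R h C)"
      using act_classes_class[OF assms] g h by (auto simp: quotient_def)
    also have "\<dots> \<longleftrightarrow> act_classes R g = act_classes R h"
      unfolding act_classes_def by (metis (mono_tags, lifting) restrict_apply' restrict_ext)
    finally show ?thesis .
  qed
  then show ?thesis
    unfolding NR_def by blast
qed

lemma equiv_NR: "R \<in> I \<Longrightarrow> equiv (carrier G) (N R)"
  unfolding NR_eq_kernel by (rule equiv_kernel_on)

lemma finite_quotient_NR:
  assumes "R \<in> I"
  shows "finite (carrier G // N R)"
  unfolding NR_eq_kernel[OF assms]
proof (rule finite_quotient_kernel_on)
  have "act_classes R g \<in> X // R \<rightarrow>\<^sub>E X // R" if g: "g \<in> carrier G" for g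
  proof -
    have "act_classes R g C \<in> X // R" if "C \<in> X // R" for C
    proof -
      obtain x where "x \<in> X" "C = R `` {x}"
        using \<open>C \<in> X // R\<close> by (rule quotientE)
      then show ?thesis
        using act_classes_class[OF assms g] act_closed[OF g] by (simp add: quotientI)
    qed
    moreover have "act_classes R g \<in> extensional (X // R)"
      by (simp add: act_classes_def)
    ultimately show ?thesis
      by (simp add: PiE_iff)
  qed
  then have "act_classes R ` carrier G \<subseteq> X // R \<rightarrow>\<^sub>E X // R"
    by blast
  moreover have "finite (X // R \<rightarrow>\<^sub>E X // R)"
    using finite_I[OF assms] by (simp add: finite_PiE)
  ultimately show "finite (act_classes R ` carrier G)"
    by (rule finite_subset)
qed

lemma NR_mono: "R \<subseteq> S \<Longrightarrow> N R \<subseteq> N S"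
  unfolding NR_def by blast

lemma NR_act_rel:
  assumes "R \<in> I" and "(g, g') \<in> N R" and "(x, x') \<in> R"
  shows "(act g x, act g' x') \<in> R"
proof -
  have "g \<in> carrier G" and "x' \<in> X"
    using assms(2,3) equiv_I[OF assms(1)] unfolding NR_def equiv_def refl_on_def by blast+
  then have "(act g x, act g x') \<in> R" and "(act g x', act g' x') \<in> R"
    using act_rel[OF assms(1) _ assms(3)] assms(2) unfolding NR_def by blast+
  then show ?thesis
    using equiv_I[OF assms(1)] unfolding equiv_def trans_on_def by blast
qed

lemma NR_mult:
  assumes "R \<in> I" and "(g, g') \<in> N R" and "(h, h') \<in> N R"
  shows "(g \<otimes>\<^bsub>G\<^esub> h, g' \<otimes>\<^bsub>G\<^esub> h') \<in> N R"
proof -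
  have carrier: "g \<in> carrier G" "g' \<in> carrier G" "h \<in> carrier G" "h' \<in> carrier G"
    using assms(2,3) unfolding NR_def by blast+
  have "(act (g \<otimes>\<^bsub>G\<^esub> h) x, act (g' \<otimes>\<^bsub>G\<^esub> h') x) \<in> R" if "x \<in> X" for x
  proof -
    have "(act h x, act h' x) \<in> R"
      using assms(3) that unfolding NR_def by blast
    then have "(act g (act h x), act g' (act h' x)) \<in> R"
      by (rule NR_act_rel[OF assms(1,2)])
    then show ?thesis
      using group_action.composition_rule[OF action] carrier that by simp
  qed
  moreover have "g \<otimes>\<^bsub>G\<^esub> h \<in> carrier G" "g' \<otimes>\<^bsub>G\<^esub> h' \<in> carrier G"
    using group.is_monoid[OF group_G] carrier by (simp_all add: monoid.m_closed)
  ultimately show ?thesis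
    unfolding NR_def by blast
qed

sublocale X_lim: quotient_inverse_system X "\<lambda>R. R" I
  by unfold_locales (simp_all add: equiv_I directed_I)

sublocale G_lim: quotient_inverse_system "carrier G" N I
  by unfold_locales (simp_all add: equiv_NR NR_mono directed_I)

lemma hatX_eq: "hatX X I = X_lim.lim"
  by (simp add: hatX_def X_lim.lim_def)

lemma hatG_eq: "hatG G X act I = G_lim.lim"
  by (simp add: hatG_def G_lim.lim_def)

lemma closR_eq: "R \<in> I \<Longrightarrow> closR X I R = X_lim.proj_kernel R"
  unfolding closR_def topX_def embX_def hatX_eq
  using X_lim.closure_emb_rel[of R] by (simp add: X_lim.lim_topology_def X_lim.emb_def[abs_def])

lemma closNR_eq: "R \<in> I \<Longrightarrow> closNR G X act I R = G_lim.proj_kernel R"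
  unfolding closNR_def topG_def embG_def hatG_eq
  using G_lim.closure_emb_rel[of R] by (simp add: G_lim.lim_topology_def G_lim.emb_def[abs_def])

lemma hat_act_component:
  assumes "d \<in> G_lim.lim" and "c \<in> X_lim.lim" and "R \<in> I" and "g \<in> d R" and "x \<in> c R"
  shows "hat_act act I d c R = R `` {act g x}"
proof -
  have "((SOME g. g \<in> d R), g) \<in> N R"
    using G_lim.lim_component_rel[OF assms(1,3) G_lim.some_in_lim_component[OF assms(1,3)] assms(4)] .
  moreover have "((SOME x. x \<in> c R), x) \<in> R"
    using X_lim.lim_component_rel[OF assms(2,3) X_lim.some_in_lim_component[OF assms(2,3)] assms(5)] .
  ultimately have "(act (SOME g. g \<in> d R) (SOME x. x \<in> c R), act g x) \<in> R"
    by (rule NR_act_rel[OF assms(3)])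
  then show ?thesis
    using equiv_class_eq[OF equiv_I[OF assms(3)]] assms(3) by (simp add: hat_act_def)
qed

lemma hat_act_in_lim:
  assumes d: "d \<in> G_lim.lim" and c: "c \<in> X_lim.lim"
  shows "hat_act act I d c \<in> X_lim.lim"
proof (rule X_lim.lim_memI)
  fix R assume R: "R \<in> I"
  obtain g x where "g \<in> d R" "x \<in> c R"
    using G_lim.lim_component_nonempty[OF d R] X_lim.lim_component_nonempty[OF c R] by blast
  moreover have "g \<in> carrier G" "x \<in> X"
    using calculation G_lim.lim_component_subset[OF d R] X_lim.lim_component_subset[OF c R] by blast+
  ultimately show "hat_act act I d c R \<in> X // R"
    using hat_act_component[OF d c R] act_closed by (simp add: quotientI)
next
  fix R S assume RS: "R \<in> I" "S \<in> I" "R \<subseteq> S"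
  obtain g x where gx: "g \<in> d R" "x \<in> c R"
    using G_lim.lim_component_nonempty[OF d RS(1)] X_lim.lim_component_nonempty[OF c RS(1)] by blast
  then have "g \<in> d S" "x \<in> c S"
    using G_lim.lim_component_mono[OF d RS] X_lim.lim_component_mono[OF c RS] by blast+
  then show "hat_act act I d c R \<subseteq> hat_act act I d c S"
    using hat_act_component[OF d c RS(1) gx] hat_act_component[OF d c RS(2)] RS(3) by auto
qed (simp add: hat_act_def)

lemma hat_mult_component:
  assumes "a \<in> G_lim.lim" and "b \<in> G_lim.lim" and "R \<in> I" and "g \<in> a R" and "h \<in> b R"
  shows "hat_mult G X act I a b R = N R `` {g \<otimes>\<^bsub>G\<^esub> h}"
proof -
  have "((SOME g. g \<in> a R), g) \<in> N R"
    using G_lim.lim_component_rel[OF assms(1,3) G_lim.some_in_lim_component[OF assms(1,3)] assms(4)] .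
  moreover have "((SOME h. h \<in> b R), h) \<in> N R"
    using G_lim.lim_component_rel[OF assms(2,3) G_lim.some_in_lim_component[OF assms(2,3)] assms(5)] .
  ultimately have "((SOME g. g \<in> a R) \<otimes>\<^bsub>G\<^esub> (SOME h. h \<in> b R), g \<otimes>\<^bsub>G\<^esub> h) \<in> N R"
    by (rule NR_mult[OF assms(3)])
  then show ?thesis
    using equiv_class_eq[OF equiv_NR[OF assms(3)]] assms(3) by (simp add: hat_mult_def)
qed

lemma hat_mult_in_lim:
  assumes a: "a \<in> G_lim.lim" and b: "b \<in> G_lim.lim"
  shows "hat_mult G X act I a b \<in> G_lim.lim"
proof (rule G_lim.lim_memI)
  fix R assume R: "R \<in> I"
  obtain g h where "g \<in> a R" "h \<in> b R"
    using G_lim.lim_component_nonempty[OF a R] G_lim.lim_component_nonempty[OF b R] by blast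
  moreover have "g \<otimes>\<^bsub>G\<^esub> h \<in> carrier G"
    using calculation G_lim.lim_component_subset[OF a R] G_lim.lim_component_subset[OF b R]
      group.is_monoid[OF group_G] by (blast intro: monoid.m_closed)
  ultimately show "hat_mult G X act I a b R \<in> carrier G // N R"
    using hat_mult_component[OF a b R] by (simp add: quotientI)
next
  fix R S assume RS: "R \<in> I" "S \<in> I" "R \<subseteq> S"
  obtain g h where gh: "g \<in> a R" "h \<in> b R"
    using G_lim.lim_component_nonempty[OF a RS(1)] G_lim.lim_component_nonempty[OF b RS(1)] by blast
  then have "g \<in> a S" "h \<in> b S"
    using G_lim.lim_component_mono[OF a RS] G_lim.lim_component_mono[OF b RS] by blast+
  then show "hat_mult G X act I a b R \<subseteq> hat_mult G X act I a b S"
    using hat_mult_component[OF a b RS(1) gh] hat_mult_component[OF a b RS(2)] NR_mono[OF RS(3)] by auto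
qed (simp add: hat_mult_def)

text \<open>Testing against the images of points of \<open>X\<close> already forces \<open>d R = e R\<close>.\<close>
lemma N_closR_eq:
  assumes R: "R \<in> I"
  shows "N_closR G X act I R = G_lim.proj_kernel R"
proof (intro equalityI subsetI)
  fix z assume "z \<in> N_closR G X act I R"
  then obtain d e where z: "z = (d, e)" and de: "d \<in> G_lim.lim" "e \<in> G_lim.lim"
    and test: "\<And>c. c \<in> X_lim.lim \<Longrightarrow> hat_act act I d c R = hat_act act I e c R"
    unfolding N_closR_def hatG_eq hatX_eq closR_eq[OF R] X_lim.proj_kernel_def by blast
  obtain g h where gh: "g \<in> d R" "h \<in> e R"
    using G_lim.lim_component_nonempty[OF de(1) R] G_lim.lim_component_nonempty[OF de(2) R] by blast
  have carrier: "g \<in> carrier G" "h \<in> carrier G"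
    using gh G_lim.lim_component_subset[OF de(1) R] G_lim.lim_component_subset[OF de(2) R] by blast+
  have "(act g x, act h x) \<in> R" if x: "x \<in> X" for x
  proof -
    have "X_lim.emb x \<in> X_lim.lim" and "x \<in> X_lim.emb x R"
      using X_lim.emb_in_lim[OF x] equiv_class_self[OF equiv_I[OF R] x] R
      by (simp_all add: X_lim.emb_def)
    then have "R `` {act g x} = R `` {act h x}"
      using test hat_act_component[OF de(1) _ R gh(1)] hat_act_component[OF de(2) _ R gh(2)] by metis
    then show ?thesis
      using eq_equiv_class_iff[OF equiv_I[OF R]] act_closed carrier x by blast
  qed
  then have "(g, h) \<in> N R"
    using carrier unfolding NR_def by blast
  then have "d R = e R"
    using G_lim.lim_component_eq_class[OF de(1) R R subset_refl gh(1)]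
      G_lim.lim_component_eq_class[OF de(2) R R subset_refl gh(2)]
      equiv_class_eq[OF equiv_NR[OF R]] by simp
  then show "z \<in> G_lim.proj_kernel R"
    using z de by (simp add: G_lim.proj_kernel_def)
next
  fix z assume "z \<in> G_lim.proj_kernel R"
  then obtain d e where z: "z = (d, e)" and de: "d \<in> G_lim.lim" "e \<in> G_lim.lim" and eq: "d R = e R"
    unfolding G_lim.proj_kernel_def by blast
  have "hat_act act I d c R = hat_act act I e c R" for c
    using eq R by (simp add: hat_act_def)
  then show "z \<in> N_closR G X act I R"
    using z de hat_act_in_lim
    by (simp add: N_closR_def hatG_eq hatX_eq closR_eq[OF R] X_lim.proj_kernel_def)
qed

lemma cofinite_congruence_proj_kernel:
  assumes R: "R \<in> I"
  shows "cofinite_congruence G_lim.lim (hat_mult G X act I) (G_lim.proj_kernel R)"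
proof -
  have "(hat_mult G X act I a c, hat_mult G X act I b d) \<in> G_lim.proj_kernel R"
    if "(a, b) \<in> G_lim.proj_kernel R" and "(c, d) \<in> G_lim.proj_kernel R" for a b c d
  proof -
    have "a \<in> G_lim.lim" "b \<in> G_lim.lim" "c \<in> G_lim.lim" "d \<in> G_lim.lim" "a R = b R" "c R = d R"
      using that unfolding G_lim.proj_kernel_def by blast+
    then show ?thesis
      using R hat_mult_in_lim unfolding G_lim.proj_kernel_def by (simp add: hat_mult_def)
  qed
  then have "\<forall>(a, b)\<in>G_lim.proj_kernel R. \<forall>(c, d)\<in>G_lim.proj_kernel R.
      (hat_mult G X act I a c, hat_mult G X act I b d) \<in> G_lim.proj_kernel R"
    by clarify
  then show ?thesis
    unfolding cofinite_congruence_def cofinite_equiv_def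
    using G_lim.equiv_proj_kernel G_lim.finite_quotient_proj_kernel[OF R finite_quotient_NR[OF R]] by blast
qed

lemma fund_system_proj_kernels:
  "fund_system_cofinite_congruences G_lim.lim (hat_mult G X act I) (G_lim.proj_kernel ` I)"
  unfolding fund_system_cofinite_congruences_def
proof (intro conjI ballI)
  show "G_lim.proj_kernel ` I \<noteq> {}"
    using nonempty_I by blast
next
  fix K assume "K \<in> G_lim.proj_kernel ` I"
  then show "cofinite_congruence G_lim.lim (hat_mult G X act I) K"
    using cofinite_congruence_proj_kernel by blast
next
  fix K L assume "K \<in> G_lim.proj_kernel ` I" "L \<in> G_lim.proj_kernel ` I"
  then obtain R S where RS: "R \<in> I" "S \<in> I" "K = G_lim.proj_kernel R" "L = G_lim.proj_kernel S"
    by blast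
  then obtain T where T: "T \<in> I" "T \<subseteq> R" "T \<subseteq> S"
    using directed_I by blast
  then have "G_lim.proj_kernel T \<subseteq> K \<inter> L"
    using G_lim.proj_kernel_mono[OF T(1) RS(1) T(2)] G_lim.proj_kernel_mono[OF T(1) RS(2) T(3)] RS(3,4)
    by blast
  then show "\<exists>M\<in>G_lim.proj_kernel ` I. M \<subseteq> K \<inter> L"
    using T(1) by blast
qed

end

lemma action_completionI:
  assumes "group G" and "group_action G X act"
    and "is_uniformity X U" and "fundamental_system U I"
    and "\<forall>R\<in>I. invariant_rel G act R \<and> cofinite_equiv X R"
  shows "action_completion G X act I"
proof (rule action_completion.intro)
  show "group G"
    by (rule assms(1))
  show "group_action G X act"
    by (rule assms(2))
  show "I \<noteq> {}"
    by (rule fundamental_system_nonempty[OF assms(3,4)])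
next
  fix R assume "R \<in> I"
  then show "equiv X R" "finite (X // R)" "invariant_rel G act R"
    using assms(5) unfolding cofinite_equiv_def by blast+
next
  fix R S assume "R \<in> I" "S \<in> I"
  then show "\<exists>T\<in>I. T \<subseteq> R \<and> T \<subseteq> S"
    by (rule fundamental_system_directed[OF assms(3,4)])
qed

theorem mainTheorem9:
  fixes G :: "('g, 'm) monoid_scheme"
    and V E :: "'x set" and s t bar :: "'x \<Rightarrow> 'x"
    and U :: "'x rel set" and act :: "'g \<Rightarrow> 'x \<Rightarrow> 'x" and I :: "'x rel set"
  assumes "group G"
    and "cofinite_graph V E s t bar U"
    and "graph_action G V E s t bar act"
    and "faithful_action G (V \<union> E) act"
    and "unif_equicontinuous G act U"
    and "fundamental_system U I"
    and "\<forall>R\<in>I. invariant_rel G act R \<and> compatible_rel V E s t bar R \<and> cofinite_equiv (V \<union> E) R"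
  shows "fund_system_cofinite_congruences (hatG G (V \<union> E) act I) (hat_mult G (V \<union> E) act I)
           {N_closR G (V \<union> E) act I R | R. R \<in> I}
       \<and> fund_system_cofinite_congruences (hatG G (V \<union> E) act I) (hat_mult G (V \<union> E) act I)
           {closNR G (V \<union> E) act I R | R. R \<in> I}
       \<and> equivalent_bases {N_closR G (V \<union> E) act I R | R. R \<in> I} {closNR G (V \<union> E) act I R | R. R \<in> I}"
proof -
  have "group_action G (V \<union> E) act"
    using assms(3) unfolding graph_action_def by (rule conjunct1)
  moreover have "is_uniformity (V \<union> E) U"
    using assms(2) unfolding cofinite_graph_def hausdorff_uniformity_def by (elim conjE)
  moreover have "\<forall>R\<in>I. invariant_rel G act R \<and> cofinite_equiv (V \<union> E) R"
    using assms(7) by blast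
  ultimately interpret action_completion G "V \<union> E" act I
    by (rule action_completionI[OF assms(1) _ _ assms(6)])
  have families: "{N_closR G (V \<union> E) act I R | R. R \<in> I} = G_lim.proj_kernel ` I"
    "{closNR G (V \<union> E) act I R | R. R \<in> I} = G_lim.proj_kernel ` I"
    unfolding Setcompr_eq_image by (simp_all add: N_closR_eq closNR_eq cong: image_cong)
  have "equivalent_bases (G_lim.proj_kernel ` I) (G_lim.proj_kernel ` I)"
    unfolding equivalent_bases_def by blast
  then show ?thesis
    unfolding families hatG_eq using fund_system_proj_kernels by blast
qed

end
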